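(* Let $V$ be a finite set, $p:2^V\to\mathbb{Z}$ a fully supermodular function with $p(\emptyset)=0$, $f,g:V\to\mathbb{Z}$ with $f\le g$, $B=B'(p)$, and suppose $B^{\square}:=B\cap T(f,g)$ contains an integral point. Let $T\subseteq V$. Then there exist a box $T(f',g')\subseteq T(f,g)$ and a subset $X_T\subseteq V$ such that an element $m\in B^{\square}\cap\mathbb{Z}^V$ minimizes $\widetilde m(T)$ over $B^{\square}\cap\mathbb{Z}^V$ if and only if $\widetilde m(X_T)=p(X_T)$ and $m\in B\cap\mathbb{Z}^V\cap T(f',g')$.
   Context: $\widetilde x(Z)=\sum_{v\in Z}x(v)$; $B'(p)=\{x\in\mathbb{R}^V:\widetilde x(V)=p(V),\ \widetilde x(Z)\ge p(Z)\ \forall Z\subset V\}$; $T(f,g)=\{x\in\mathbb{R}^V:f\le x\le g\}$. Fully supermodular: $p(X)+p(Y)\le p(X\cap Y)+p(X\cup Y)$ for all $X,Y\subseteq V$. *)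

theory Defs
  imports Complex_Main
begin

text \<open>Vectors in R^V are modelled as functions 'a => real; only their values on V matter.
  x~(Z) is sum x Z.\<close>

definition fully_supermodular :: "'a set \<Rightarrow> ('a set \<Rightarrow> int) \<Rightarrow> bool" where
  "fully_supermodular V p \<longleftrightarrow>
     (\<forall>X Y. X \<subseteq> V \<longrightarrow> Y \<subseteq> V \<longrightarrow> p X + p Y \<le> p (X \<inter> Y) + p (X \<union> Y))"

definition base_polyhedron :: "'a set \<Rightarrow> ('a set \<Rightarrow> int) \<Rightarrow> ('a \<Rightarrow> real) set" where
  "base_polyhedron V p = {x. sum x V = real_of_int (p V) \<and>
      (\<forall>Z. Z \<subset> V \<longrightarrow> sum x Z \<ge> real_of_int (p Z))}"

definition box :: "'a set \<Rightarrow> ('a \<Rightarrow> real) \<Rightarrow> ('a \<Rightarrow> real) \<Rightarrow> ('a \<Rightarrow> real) set" where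
  "box V f g = {x. \<forall>v\<in>V. f v \<le> x v \<and> x v \<le> g v}"

end

theory Submission
  imports Defs
begin

text \<open>Let \<open>m\<^sub>0\<close> minimize \<open>m(T)\<close> over the integral points of \<open>B\<^sup>\<box>\<close>. If \<open>f t < m\<^sub>0 t\<close> for some
  \<open>t \<in> T\<close> and \<open>m\<^sub>0 u < g u\<close> for some \<open>u \<notin> T\<close>, then some \<open>m\<^sub>0\<close>-tight set contains \<open>t\<close> but not \<open>u\<close>,
  for otherwise moving one unit from \<open>t\<close> to \<open>u\<close> would stay in \<open>B\<^sup>\<box>\<close> and decrease \<open>m(T)\<close>.
  By supermodularity the tight sets form a lattice, so the union \<open>X\<close> of the smallest tight sets
  around such \<open>t\<close> is tight and contains all of them but none of the \<open>u\<close>. Hence \<open>m\<^sub>0\<close> attains the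
  lower bound \<open>p(X) - g(X - T) + f(T - X)\<close> of \<open>m(T)\<close>, and the minimizers are exactly the points
  of \<open>B\<^sup>\<box>\<close> for which \<open>X\<close> is tight, \<open>m = g\<close> on \<open>X - T\<close> and \<open>m = f\<close> on \<open>T - X\<close>.\<close>

definition int_base_box :: "'a set \<Rightarrow> ('a set \<Rightarrow> int) \<Rightarrow> ('a \<Rightarrow> int) \<Rightarrow> ('a \<Rightarrow> int) \<Rightarrow> ('a \<Rightarrow> int) set" where
  "int_base_box V p f g =
     {m. sum m V = p V \<and> (\<forall>Z\<subseteq>V. p Z \<le> sum m Z) \<and> (\<forall>v\<in>V. f v \<le> m v \<and> m v \<le> g v)}"

definition tight :: "'a set \<Rightarrow> ('a set \<Rightarrow> int) \<Rightarrow> ('a \<Rightarrow> int) \<Rightarrow> 'a set \<Rightarrow> bool" where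
  "tight V p m Z \<longleftrightarrow> Z \<subseteq> V \<and> sum m Z = p Z"

definition minmax_bound :: "('a set \<Rightarrow> int) \<Rightarrow> ('a \<Rightarrow> int) \<Rightarrow> ('a \<Rightarrow> int) \<Rightarrow> 'a set \<Rightarrow> 'a set \<Rightarrow> int" where
  "minmax_bound p f g T X = p X - sum g (X - T) + sum f (T - X)"

lemma of_int_in_box_iff:
  "(real_of_int \<circ> m) \<in> box V (real_of_int \<circ> f) (real_of_int \<circ> g) \<longleftrightarrow> (\<forall>v\<in>V. f v \<le> m v \<and> m v \<le> g v)"
  unfolding box_def by auto

lemma of_int_in_base_polyhedron_iff:
  "(real_of_int \<circ> m) \<in> base_polyhedron V p \<longleftrightarrow> sum m V = p V \<and> (\<forall>Z\<subseteq>V. p Z \<le> sum m Z)"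
proof -
  have sum_of_int: "sum (real_of_int \<circ> m) Z = real_of_int (sum m Z)" for Z
    by simp
  have "(\<forall>Z\<subseteq>V. p Z \<le> sum m Z) \<longleftrightarrow> p V \<le> sum m V \<and> (\<forall>Z. Z \<subset> V \<longrightarrow> p Z \<le> sum m Z)"
    by (auto simp: subset_iff_psubset_eq)
  then show ?thesis
    unfolding base_polyhedron_def mem_Collect_eq sum_of_int of_int_eq_iff of_int_le_iff by auto
qed

lemma of_int_in_base_box_iff:
  "(real_of_int \<circ> m) \<in> base_polyhedron V p \<inter> box V (real_of_int \<circ> f) (real_of_int \<circ> g)
     \<longleftrightarrow> m \<in> int_base_box V p f g"
  by (simp add: int_base_box_def of_int_in_base_polyhedron_iff of_int_in_box_iff)

lemma box_mono:
  assumes "\<forall>v\<in>V. f v \<le> f' v \<and> g' v \<le> g v"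
  shows "box V f' g' \<subseteq> box V f g"
  using assms unfolding box_def by (auto intro: order_trans)

lemma tight_Int_Un:
  assumes "finite V" "fully_supermodular V p" "\<forall>Z\<subseteq>V. p Z \<le> sum m Z"
    and "tight V p m X" "tight V p m Y"
  shows "tight V p m (X \<inter> Y)" "tight V p m (X \<union> Y)"
proof -
  have XY: "X \<subseteq> V" "Y \<subseteq> V" "sum m X = p X" "sum m Y = p Y"
    using assms(4,5) unfolding tight_def by auto
  then have "finite X" "finite Y"
    using assms(1) finite_subset by auto
  then have "sum m (X \<union> Y) + sum m (X \<inter> Y) = sum m X + sum m Y"
    by (rule sum.union_inter)
  moreover have "p X + p Y \<le> p (X \<inter> Y) + p (X \<union> Y)"
    using assms(2) XY unfolding fully_supermodular_def by blast
  moreover have "X \<inter> Y \<subseteq> V" "X \<union> Y \<subseteq> V"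
    using XY by auto
  then have "p (X \<inter> Y) \<le> sum m (X \<inter> Y)" "p (X \<union> Y) \<le> sum m (X \<union> Y)"
    using assms(3) by blast+
  ultimately show "tight V p m (X \<inter> Y)" "tight V p m (X \<union> Y)"
    using XY unfolding tight_def by auto
qed

lemma finite_tight_family:
  assumes "finite V" "\<forall>Z\<in>F. tight V p m Z"
  shows "finite F"
  using assms by (blast intro: finite_subset[of F "Pow V"] dest: tight_def[THEN iffD1])

lemma tight_Inter:
  assumes "finite V" "fully_supermodular V p" "\<forall>Z\<subseteq>V. p Z \<le> sum m Z"
    and "F \<noteq> {}" "\<forall>Z\<in>F. tight V p m Z"
  shows "tight V p m (\<Inter>F)"
  using finite_tight_family[OF assms(1,5)] assms(4,5)
proof (induction F rule: finite_ne_induct)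
  case (insert Z F)
  then show ?case
    using tight_Int_Un(1)[OF assms(1-3)] by simp
qed simp

lemma tight_Union:
  assumes "finite V" "fully_supermodular V p" "\<forall>Z\<subseteq>V. p Z \<le> sum m Z" "p {} = 0"
    and "\<forall>Z\<in>F. tight V p m Z"
  shows "tight V p m (\<Union>F)"
  using finite_tight_family[OF assms(1,5)] assms(5)
proof (induction F rule: finite_induct)
  case empty
  then show ?case
    using assms(4) unfolding tight_def by simp
next
  case (insert Z F)
  then show ?case
    using tight_Int_Un(2)[OF assms(1-3)] by simp
qed

lemma ex_tight_separator:
  assumes "finite V" "fully_supermodular V p" "\<forall>Z\<subseteq>V. p Z \<le> sum m Z" "p {} = 0"
    and "tight V p m V" "A \<subseteq> V"
    and separated: "\<forall>t\<in>A. \<forall>u\<in>U. \<exists>Z. tight V p m Z \<and> t \<in> Z \<and> u \<notin> Z"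
  shows "\<exists>X. tight V p m X \<and> A \<subseteq> X \<and> X \<inter> U = {}"
proof -
  define tight_hull where "tight_hull t = \<Inter>{Z. tight V p m Z \<and> t \<in> Z}" for t
  have "tight V p m (tight_hull t)" if "t \<in> V" for t
    unfolding tight_hull_def using assms(5) that by (intro tight_Inter[OF assms(1-3)]) auto
  then have "tight V p m (\<Union>(tight_hull ` A))"
    using assms(6) by (intro tight_Union[OF assms(1-4)]) auto
  moreover have "A \<subseteq> \<Union>(tight_hull ` A)"
    unfolding tight_hull_def by blast
  moreover have "\<Union>(tight_hull ` A) \<inter> U = {}"
    using separated unfolding tight_hull_def by blast
  ultimately show ?thesis
    by blast
qed

lemma exchange_in_int_base_box:
  assumes "finite V" "m \<in> int_base_box V p f g"
    and "t \<in> V" "u \<in> V" "t \<noteq> u" "f t < m t" "m u < g u"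
    and no_tight: "\<forall>Z. tight V p m Z \<longrightarrow> t \<in> Z \<longrightarrow> u \<in> Z"
  shows "(\<lambda>v. m v + (if v = u then 1 else 0) - (if v = t then 1 else 0)) \<in> int_base_box V p f g"
    (is "?m' \<in> _")
proof -
  have sum_m': "sum ?m' Z = sum m Z + (if u \<in> Z then 1 else 0) - (if t \<in> Z then 1 else 0)"
    if "finite Z" for Z
    using that by (simp add: sum.distrib sum_subtractf)
  have "p Z \<le> sum ?m' Z" if "Z \<subseteq> V" for Z
  proof -
    have "p Z \<le> sum m Z"
      using assms(2) that unfolding int_base_box_def by blast
    moreover have "p Z \<noteq> sum m Z" if "t \<in> Z" "u \<notin> Z"
      using no_tight \<open>Z \<subseteq> V\<close> that unfolding tight_def by auto
    ultimately show ?thesis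
      using sum_m'[OF finite_subset[OF that assms(1)]] by auto
  qed
  then show ?thesis
    using assms(2-7) sum_m'[OF assms(1)] unfolding int_base_box_def by auto
qed

lemma minimizer_separated:
  assumes "finite V" "T \<subseteq> V"
    and "m \<in> int_base_box V p f g" "\<forall>m'\<in>int_base_box V p f g. sum m T \<le> sum m' T"
    and "t \<in> T" "f t < m t" "u \<in> V - T" "m u < g u"
  shows "\<exists>Z. tight V p m Z \<and> t \<in> Z \<and> u \<notin> Z"
proof (rule ccontr)
  assume "\<not> ?thesis"
  then have "(\<lambda>v. m v + (if v = u then 1 else 0) - (if v = t then 1 else 0)) \<in> int_base_box V p f g"
    using assms by (intro exchange_in_int_base_box) auto
  then have "sum m T \<le> sum m T - 1"
    using assms(4,5,7) finite_subset[OF assms(2,1)] by (force simp: sum.distrib sum_subtractf)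
  then show False
    by simp
qed

lemma minmax_bound_le_sum:
  assumes "finite V" "T \<subseteq> V" "X \<subseteq> V" "m \<in> int_base_box V p f g"
  shows "minmax_bound p f g T X \<le> sum m T"
    and "sum m T = minmax_bound p f g T X \<longleftrightarrow>
           tight V p m X \<and> (\<forall>v\<in>X - T. m v = g v) \<and> (\<forall>v\<in>T - X. m v = f v)"
proof -
  have fin: "finite X" "finite T"
    using assms(1-3) by (auto intro: finite_subset)
  have bounds: "\<forall>v\<in>V. f v \<le> m v \<and> m v \<le> g v" and tight_le: "p X \<le> sum m X"
    using assms(3,4) unfolding int_base_box_def by auto
  have upper: "sum m (X - T) \<le> sum g (X - T)" and lower: "sum f (T - X) \<le> sum m (T - X)"
    using bounds assms(2,3) by (auto intro!: sum_mono)
  have split: "sum m T = sum m X - sum m (X - T) + sum m (T - X)"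
    using sum.Int_Diff[OF fin(2), of m X] sum.Int_Diff[OF fin(1), of m T] by (simp add: Int_commute)
  then show "minmax_bound p f g T X \<le> sum m T"
    unfolding minmax_bound_def using tight_le upper lower by linarith
  have "sum m T = minmax_bound p f g T X \<longleftrightarrow>
          sum m X = p X \<and> sum m (X - T) = sum g (X - T) \<and> sum f (T - X) = sum m (T - X)"
    unfolding minmax_bound_def using split tight_le upper lower by arith
  moreover have "sum m (X - T) = sum g (X - T) \<longleftrightarrow> (\<forall>v\<in>X - T. m v = g v)"
    using bounds assms(3) fin by (auto intro: sum.cong sum_mono_inv[of m "X - T" g])
  moreover have "sum f (T - X) = sum m (T - X) \<longleftrightarrow> (\<forall>v\<in>T - X. m v = f v)"
    using bounds assms(2) fin by (auto intro: sum.cong sum_mono_inv[of f "T - X" m, symmetric])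
  ultimately show "sum m T = minmax_bound p f g T X \<longleftrightarrow>
      tight V p m X \<and> (\<forall>v\<in>X - T. m v = g v) \<and> (\<forall>v\<in>T - X. m v = f v)"
    using assms(3) unfolding tight_def by simp
qed

lemma minimizer_attains_minmax_bound:
  assumes "finite V" "fully_supermodular V p" "p {} = 0" "T \<subseteq> V"
    and "m \<in> int_base_box V p f g" "\<forall>m'\<in>int_base_box V p f g. sum m T \<le> sum m' T"
  shows "\<exists>X\<subseteq>V. sum m T = minmax_bound p f g T X"
proof -
  define A where "A = {t\<in>T. f t < m t}"
  define U where "U = {u\<in>V - T. m u < g u}"
  have lower: "\<forall>Z\<subseteq>V. p Z \<le> sum m Z" and tight_V: "tight V p m V"
    using assms(5) unfolding int_base_box_def tight_def by auto
  have "A \<subseteq> V"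
    using assms(4) unfolding A_def by blast
  moreover have "\<forall>t\<in>A. \<forall>u\<in>U. \<exists>Z. tight V p m Z \<and> t \<in> Z \<and> u \<notin> Z"
    unfolding A_def U_def using minimizer_separated[OF assms(1,4-6)] by blast
  ultimately obtain X where X: "tight V p m X" "A \<subseteq> X" "X \<inter> U = {}"
    using ex_tight_separator[OF assms(1,2) lower assms(3) tight_V] by blast
  then have "X \<subseteq> V"
    unfolding tight_def by blast
  moreover have "\<forall>v\<in>X - T. m v = g v" "\<forall>v\<in>T - X. m v = f v"
    using X(2,3) assms(4,5) \<open>X \<subseteq> V\<close> unfolding A_def U_def int_base_box_def by fastforce+
  ultimately show ?thesis
    using minmax_bound_le_sum(2)[OF assms(1,4) _ assms(5)] X(1) by blast
qed

lemma ex_min_sum_int_base_box: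
  assumes "T \<subseteq> V" "int_base_box V p f g \<noteq> {}"
  shows "\<exists>m\<in>int_base_box V p f g. \<forall>m'\<in>int_base_box V p f g. sum m T \<le> sum m' T"
proof -
  have above_f: "sum f T \<le> sum m T" if "m \<in> int_base_box V p f g" for m
    using that assms(1) unfolding int_base_box_def by (auto intro!: sum_mono)
  obtain m\<^sub>1 where "m\<^sub>1 \<in> int_base_box V p f g"
    using assms(2) by blast
  then obtain m where "m \<in> int_base_box V p f g"
    and least: "\<forall>m'. m' \<in> int_base_box V p f g \<longrightarrow> nat (sum m T - sum f T) \<le> nat (sum m' T - sum f T)"
    using ex_has_least_nat[of "\<lambda>m. m \<in> int_base_box V p f g" m\<^sub>1 "\<lambda>m. nat (sum m T - sum f T)"]
    by blast
  have "\<forall>m'\<in>int_base_box V p f g. sum m T \<le> sum m' T"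
  proof
    fix m' assume "m' \<in> int_base_box V p f g"
    then have "nat (sum m T - sum f T) \<le> nat (sum m' T - sum f T)" "sum f T \<le> sum m' T"
      using least above_f by auto
    then show "sum m T \<le> sum m' T"
      by (simp add: nat_le_eq_zle)
  qed
  then show ?thesis
    using \<open>m \<in> int_base_box V p f g\<close> by blast
qed

lemma pinned_box_iff:
  fixes f g m :: "'a \<Rightarrow> 'b::order"
  assumes "P \<subseteq> V" "Q \<subseteq> V" "\<forall>v\<in>V. f v \<le> m v \<and> m v \<le> g v"
  shows "(\<forall>v\<in>V. (if v \<in> P then g v else f v) \<le> m v \<and> m v \<le> (if v \<in> Q then f v else g v))
           \<longleftrightarrow> (\<forall>v\<in>P. m v = g v) \<and> (\<forall>v\<in>Q. m v = f v)"
proof -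
  have "(if v \<in> P then g v else f v) \<le> m v \<and> m v \<le> (if v \<in> Q then f v else g v)
          \<longleftrightarrow> (v \<in> P \<longrightarrow> m v = g v) \<and> (v \<in> Q \<longrightarrow> m v = f v)" if "v \<in> V" for v
  proof -
    have "f v \<le> m v" "m v \<le> g v"
      using assms(3) that by auto
    then show ?thesis
      by auto
  qed
  then show ?thesis
    using assms(1,2) by blast
qed

lemma minimizer_iff_tight_pinned:
  assumes "finite V" "T \<subseteq> V" "X \<subseteq> V"
    and "sum m\<^sub>0 T = minmax_bound p f g T X" "m\<^sub>0 \<in> int_base_box V p f g"
    and "m \<in> int_base_box V p f g"
  shows "(\<forall>m'\<in>int_base_box V p f g. sum m T \<le> sum m' T) \<longleftrightarrow>
           tight V p m X \<and> (\<forall>v\<in>X - T. m v = g v) \<and> (\<forall>v\<in>T - X. m v = f v)"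
proof -
  have "(\<forall>m'\<in>int_base_box V p f g. sum m T \<le> sum m' T) \<longleftrightarrow> sum m T = minmax_bound p f g T X"
    using minmax_bound_le_sum(1)[OF assms(1-3)] assms(4-6) by (metis order.antisym order.trans)
  then show ?thesis
    using minmax_bound_le_sum(2)[OF assms(1-3,6)] by simp
qed

theorem theorem5p10:
  fixes V :: "'a set" and p :: "'a set \<Rightarrow> int" and f g :: "'a \<Rightarrow> int" and T :: "'a set"
  assumes "finite V"
    and "fully_supermodular V p"
    and "p {} = 0"
    and "\<forall>v\<in>V. f v \<le> g v"
    and "\<exists>m :: 'a \<Rightarrow> int. (real_of_int \<circ> m) \<in> base_polyhedron V p \<inter> box V (real_of_int \<circ> f) (real_of_int \<circ> g)"
    and "T \<subseteq> V"
  shows "\<exists>(f' :: 'a \<Rightarrow> int) (g' :: 'a \<Rightarrow> int) X\<^sub>T.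
           box V (real_of_int \<circ> f') (real_of_int \<circ> g') \<subseteq> box V (real_of_int \<circ> f) (real_of_int \<circ> g)
         \<and> X\<^sub>T \<subseteq> V
         \<and> (\<forall>m :: 'a \<Rightarrow> int.
              (real_of_int \<circ> m) \<in> base_polyhedron V p \<inter> box V (real_of_int \<circ> f) (real_of_int \<circ> g) \<longrightarrow>
              ((\<forall>m' :: 'a \<Rightarrow> int.
                  (real_of_int \<circ> m') \<in> base_polyhedron V p \<inter> box V (real_of_int \<circ> f) (real_of_int \<circ> g) \<longrightarrow>
                  sum m T \<le> sum m' T)
               \<longleftrightarrow>
               (sum m X\<^sub>T = p X\<^sub>T \<and> (real_of_int \<circ> m) \<in> base_polyhedron V p
                \<and> (real_of_int \<circ> m) \<in> box V (real_of_int \<circ> f') (real_of_int \<circ> g'))))"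
proof -
  let ?B = "int_base_box V p f g"
  have "?B \<noteq> {}"
    using assms(5) of_int_in_base_box_iff by blast
  then obtain m\<^sub>0 where m\<^sub>0: "m\<^sub>0 \<in> ?B" "\<forall>m\<in>?B. sum m\<^sub>0 T \<le> sum m T"
    using ex_min_sum_int_base_box[OF assms(6)] by blast
  obtain X where X: "X \<subseteq> V" "sum m\<^sub>0 T = minmax_bound p f g T X"
    using minimizer_attains_minmax_bound[OF assms(1-3,6) m\<^sub>0] by blast
  define f' where "f' v = (if v \<in> X - T then g v else f v)" for v
  define g' where "g' v = (if v \<in> T - X then f v else g v)" for v
  show ?thesis
    unfolding of_int_in_base_box_iff
  proof (rule exI[of _ f'], rule exI[of _ g'], rule exI[of _ X], intro conjI allI impI)
    show "box V (real_of_int \<circ> f') (real_of_int \<circ> g') \<subseteq> box V (real_of_int \<circ> f) (real_of_int \<circ> g)"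
      using assms(4) by (intro box_mono) (auto simp: f'_def g'_def)
    show "X \<subseteq> V"
      by (fact X(1))
  next
    fix m assume m: "m \<in> ?B"
    then have "(real_of_int \<circ> m) \<in> base_polyhedron V p"
      by (simp add: of_int_in_base_box_iff[symmetric])
    moreover have "(real_of_int \<circ> m) \<in> box V (real_of_int \<circ> f') (real_of_int \<circ> g') \<longleftrightarrow>
        (\<forall>v\<in>X - T. m v = g v) \<and> (\<forall>v\<in>T - X. m v = f v)"
      using m X(1) assms(6) unfolding of_int_in_box_iff f'_def g'_def int_base_box_def
      by (intro pinned_box_iff) auto
    ultimately show "(\<forall>m'. m' \<in> ?B \<longrightarrow> sum m T \<le> sum m' T) \<longleftrightarrow>
        sum m X = p X \<and> (real_of_int \<circ> m) \<in> base_polyhedron V p \<and>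
        (real_of_int \<circ> m) \<in> box V (real_of_int \<circ> f') (real_of_int \<circ> g')"
      using minimizer_iff_tight_pinned[OF assms(1,6) X m\<^sub>0(1) m] X(1)
      unfolding Ball_def tight_def by simp
  qed
qed

end
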